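(* Let $X\in\mathbb{R}^p$ have distribution function $F$. Let $f(\cdot;\boldsymbol{\mu},\boldsymbol{\Sigma})$ be a family of probability densities on $\mathbb{R}^p$ indexed by $\boldsymbol{\mu}\in\mathbb{R}^p$ and positive definite $\boldsymbol{\Sigma}\in\mathbb{R}^{p\times p}$, and let $\phi(\cdot;\boldsymbol{\mu},\boldsymbol{\Sigma})$ denote the $N_p(\boldsymbol{\mu},\boldsymbol{\Sigma})$ density. Let $\mathcal{M}$ be a set of cluster configurations; each $m\in\mathcal{M}$ is a parameter $\boldsymbol{\theta}^{(m)}=\{(\pi_k^{(m)},\boldsymbol{\mu}_k^{(m)},\boldsymbol{\Sigma}_k^{(m)})\}_{k=1}^{K(\boldsymbol{\theta}^{(m)})}$ with $\pi_k^{(m)}>0$, $\boldsymbol{\mu}_k^{(m)}\in\mathbb{R}^p$, $\boldsymbol{\Sigma}_k^{(m)}$ positive definite. For such $\boldsymbol{\theta}$ define the quadratic score $\mathrm{qs}(\mathbf{x};\boldsymbol{\theta}_k)=\log\pi_k-\tfrac12\log\det\boldsymbol{\Sigma}_k-\tfrac12(\mathbf{x}-\boldsymbol{\mu}_k)^\top\boldsymbol{\Sigma}_k^{-1}(\mathbf{x}-\boldsymbol{\mu}_k)$, the sets $Q_k(\boldsymbol{\theta})=\{\mathbf{x}:\mathrm{qs}(\mathbf{x};\boldsymbol{\theta}_k)=\max_{1\le j\le K(\boldsymbol{\theta})}\mathrm{qs}(\mathbf{x};\boldsymbol{\theta}_j)\}$ (assumed to form a partition of $\mathbb{R}^p$),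 and $$L(\boldsymbol{\theta})=\sum_{k=1}^{K(\boldsymbol{\theta})}\int_{Q_k(\boldsymbol{\theta})}\log\big(\pi_k f(\mathbf{x};\boldsymbol{\mu}_k,\boldsymbol{\Sigma}_k)\big)\,dF,\qquad H(\boldsymbol{\theta})=\sum_{k=1}^{K(\boldsymbol{\theta})}\int_{Q_k(\boldsymbol{\theta})}\mathrm{qs}(\mathbf{x};\boldsymbol{\theta}_k)\,dF.$$ Assume all these integrals exist and that (C3) $\inf_{m\in\mathcal{M}}\Big\{\int_{Q_k(\boldsymbol{\theta}^{(m)})}\log f(\mathbf{x};\boldsymbol{\mu}_k^{(m)},\boldsymbol{\Sigma}_k^{(m)})\,dF-\int_{Q_k(\boldsymbol{\theta}^{(m)})}\log\phi(\mathbf{x};\boldsymbol{\mu}_k^{(m)},\boldsymbol{\Sigma}_k^{(m)})\,dF\Big\}\ge 0$ for all $k=1,\dots,K(\boldsymbol{\theta}^{(m)})$. Then for every $m\in\mathcal{M}$, $$H(\boldsymbol{\theta}^{(m)})=c+L(\boldsymbol{\theta}^{(m)})-\Lambda(\boldsymbol{\theta}^{(m)}),$$ where $c$ is a positive constant (not depending on $m$) and $$\Lambda(\boldsymbol{\theta}^{(m)})=\sum_{k=1}^{K(\boldsymbol{\theta}^{(m)})}\int_{Q_k(\boldsymbol{\theta}^{(m)})}\log\!\left(\frac{f(\mathbf{x};\boldsymbol{\mu}_k^{(m)},\boldsymbol{\Sigma}_k^{(m)})}{\phi(\mathbf{x};\boldsymbol{\mu}_k^{(m)},\boldsymbol{\Sigma}_k^{(m)})}\right)dF\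 \ge 0.$$
   Context: $K(\boldsymbol{\theta})$ denotes the number of groups described by a configuration $\boldsymbol{\theta}$; $\boldsymbol{\theta}_k=(\pi_k,\boldsymbol{\mu}_k,\boldsymbol{\Sigma}_k)$ represents size, center and scatter of the $k$-th cluster. $H$ is the population hard score criterion and $L$ the population partition log-likelihood-type criterion. *)

theory Defs
  imports "HOL-Probability.Probability"
begin

definition pos_def :: "real^'n^'n \<Rightarrow> bool" where
  "pos_def S \<longleftrightarrow> transpose S = S \<and> (\<forall>x. x \<noteq> 0 \<longrightarrow> x \<bullet> (S *v x) > 0)"

definition gauss_dens :: "real^'n \<Rightarrow> real^'n \<Rightarrow> real^'n^'n \<Rightarrow> real" where
  "gauss_dens x mu S =
     exp (- (1/2) * ((x - mu) \<bullet> (matrix_inv S *v (x - mu))))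
     / sqrt ((2 * pi) ^ CARD('n) * det S)"

text \<open>A cluster configuration: list of components (pi_k, mu_k, Sigma_k); K(theta) = length.\<close>
type_synonym 'n config = "(real \<times> (real^'n) \<times> (real^'n^'n)) list"

definition K :: "('n::finite) config \<Rightarrow> nat" where
  "K th = length th"

definition valid_config :: "('n::finite) config \<Rightarrow> bool" where
  "valid_config th \<longleftrightarrow> (\<forall>(p, mu, S) \<in> set th. p > 0 \<and> pos_def S)"

definition cw :: "('n::finite) config \<Rightarrow> nat \<Rightarrow> real" where "cw th k = fst (th ! k)"
definition cmu :: "('n::finite) config \<Rightarrow> nat \<Rightarrow> real^'n" where "cmu th k = fst (snd (th ! k))"
definition cSig :: "('n::finite) config \<Rightarrow> nat \<Rightarrow> real^'n^'n" where "cSig th k = snd (snd (th ! k))"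

definition qs :: "real^'n \<Rightarrow> real \<times> (real^'n) \<times> (real^'n^'n) \<Rightarrow> real" where
  "qs x c = (case c of (p, mu, S) \<Rightarrow>
     ln p - (1/2) * ln (det S) - (1/2) * ((x - mu) \<bullet> (matrix_inv S *v (x - mu))))"

definition Qset :: "('n::finite) config \<Rightarrow> nat \<Rightarrow> (real^'n) set" where
  "Qset th k = {x. qs x (th ! k) = Max {qs x (th ! j) | j. j < K th}}"

definition Lcrit :: "(real^'n) measure \<Rightarrow> (real^'n \<Rightarrow> real^'n \<Rightarrow> real^'n^'n \<Rightarrow> real)
    \<Rightarrow> ('n::finite) config \<Rightarrow> real" where
  "Lcrit F f th = (\<Sum>k<K th. LINT x:Qset th k|F. ln (cw th k * f x (cmu th k) (cSig th k)))"

definition Hcrit :: "(real^'n) measure \<Rightarrow> ('n::finite) config \<Rightarrow> real" where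
  "Hcrit F th = (\<Sum>k<K th. LINT x:Qset th k|F. qs x (th ! k))"

definition Lambda :: "(real^'n) measure \<Rightarrow> (real^'n \<Rightarrow> real^'n \<Rightarrow> real^'n^'n \<Rightarrow> real)
    \<Rightarrow> ('n::finite) config \<Rightarrow> real" where
  "Lambda F f th = (\<Sum>k<K th. LINT x:Qset th k|F.
      ln (f x (cmu th k) (cSig th k) / gauss_dens x (cmu th k) (cSig th k)))"

end

theory Submission
  imports Defs
begin

text \<open>Up to the additive constant \<open>c = p/2 \<cdot> ln (2\<pi>)\<close>, the quadratic score is the logarithm
  \<open>ln (\<pi>\<^sub>k \<phi>(x; \<mu>\<^sub>k, \<Sigma>\<^sub>k))\<close> of the weighted normal density, and wherever \<open>f > 0\<close> this equals
  \<open>ln (\<pi>\<^sub>k f) - ln (f / \<phi>)\<close>. Integrating over the cells \<open>Q\<^sub>k\<close> of the partition and summing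
  over \<open>k\<close>, the constant contributes \<open>c \<cdot> \<Sum>\<^sub>k F(Q\<^sub>k) = c\<close>; the sign of \<open>\<Lambda>\<close> is (C3) rewritten
  with \<open>ln (f / \<phi>) = ln f - ln \<phi>\<close>.\<close>

lemma pos_quadratic_form_det_nonzero:
  fixes S :: "real^'n^'n"
  assumes "\<And>x. x \<noteq> 0 \<Longrightarrow> x \<bullet> (S *v x) > 0"
  shows "det S \<noteq> 0"
proof
  assume "det S = 0"
  then have "\<not> (\<exists>B. B ** S = mat 1)"
    using invertible_det_nz invertible_left_inverse by blast
  then obtain x where "S *v x = 0" "x \<noteq> 0"
    using matrix_left_invertible_ker by blast
  then show False using assms by fastforce
qed

text \<open>Along the segment from the identity to \<open>S\<close> every matrix is positive definite, so the
  determinant never vanishes and keeps the sign of \<open>det 1 = 1\<close>.\<close>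

lemma pos_def_det_pos:
  fixes S :: "real^'n^'n"
  assumes "pos_def S"
  shows "det S > 0"
proof (rule ccontr)
  assume "\<not> det S > 0"
  define M where "M t = t *\<^sub>R S + (1 - t) *\<^sub>R (mat 1 :: real^'n^'n)" for t :: real
  have "continuous_on {0..1} (\<lambda>t. det (M t))"
    unfolding M_def det_def by (intro continuous_intros)
  moreover have "det (M 0) = 1" "det (M 1) \<le> 0"
    using \<open>\<not> det S > 0\<close> by (simp_all add: M_def)
  ultimately obtain t where t: "t \<in> {0..1}" "det (M t) = 0"
    using IVT2'[of "\<lambda>t. det (M t)" 1 0 0] by force
  have "x \<bullet> (M t *v x) > 0" if "x \<noteq> 0" for x
  proof -
    have "x \<bullet> (M t *v x) = t * (x \<bullet> (S *v x)) + (1 - t) * (x \<bullet> x)"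
      by (simp add: M_def matrix_vector_mult_add_rdistrib
          scaleR_matrix_vector_assoc[symmetric] inner_add_right)
    moreover have "x \<bullet> (S *v x) > 0" "x \<bullet> x > 0"
      using assms that unfolding pos_def_def by auto
    ultimately show ?thesis
      using t(1) by (cases "t = 0") (auto intro: add_pos_nonneg)
  qed
  then show False using pos_quadratic_form_det_nonzero t(2) by blast
qed

lemma gauss_dens_pos:
  fixes S :: "real^'n^'n"
  assumes "det S > 0"
  shows "gauss_dens x mu S > 0"
  using assms by (simp add: gauss_dens_def)

lemma qs_eq_ln_gauss_dens:
  fixes S :: "real^'n^'n"
  assumes "w > 0" "det S > 0"
  shows "qs x (w, mu, S) = real CARD('n) / 2 * ln (2 * pi) + ln (w * gauss_dens x mu S)"
proof -
  define q where "q = (x - mu) \<bullet> (matrix_inv S *v (x - mu))"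
  define A where "A = (2 * pi) ^ CARD('n) * det S"
  have "A > 0" using assms(2) by (simp add: A_def)
  have ln_A: "ln A = real CARD('n) * ln (2 * pi) + ln (det S)"
    using assms(2) by (simp add: A_def ln_mult ln_realpow algebra_simps)
  have "ln (gauss_dens x mu S) = - (1/2) * q - ln A / 2"
    using \<open>A > 0\<close> assms(2) by (simp add: gauss_dens_def q_def A_def ln_div ln_sqrt)
  then have "ln (w * gauss_dens x mu S) = ln w - (1/2) * q - ln A / 2"
    using ln_mult_pos[OF assms(1) gauss_dens_pos[OF assms(2)]] by simp
  then show ?thesis
    unfolding qs_def prod.case q_def[symmetric] by (simp add: ln_A field_simps)
qed

lemma qs_borel_measurable: "(\<lambda>x. qs x c) \<in> borel_measurable borel"
proof -
  obtain p mu S where c: "c = (p, mu, S)" by (cases c) auto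
  have "continuous_on UNIV (\<lambda>x. qs x c)"
    unfolding c qs_def prod.case
    by (intro continuous_intros bounded_linear.continuous_on[OF matrix_vector_mul_bounded_linear])
  then show ?thesis by (rule borel_measurable_continuous_onI)
qed

lemma Qset_sets_borel: "Qset th k \<in> sets borel"
proof -
  have "{qs x (th ! j) | j. j < K th} = (\<lambda>j. qs x (th ! j)) ` {..<K th}" for x by auto
  then have "Qset th k = {x \<in> space borel. qs x (th ! k) = Max ((\<lambda>j. qs x (th ! j)) ` {..<K th})}"
    unfolding Qset_def by simp
  also have "\<dots> \<in> sets borel"
    by (intro measurable_equality_set qs_borel_measurable borel_measurable_Max) auto
  finally show ?thesis .
qed

lemma valid_config_nth:
  assumes "valid_config th" "k < K th"
  shows "th ! k = (cw th k, cmu th k, cSig th k)" "cw th k > 0" "pos_def (cSig th k)"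
proof -
  show th_k: "th ! k = (cw th k, cmu th k, cSig th k)" by (simp add: cw_def cmu_def cSig_def)
  have "th ! k \<in> set th" using assms(2) by (simp add: K_def)
  then show "cw th k > 0" "pos_def (cSig th k)"
    using assms(1) th_k unfolding valid_config_def by (metis (lifting) case_prodD)+
qed

lemma set_integral_cong_AE_integrable:
  assumes "set_integrable M A f" "set_integrable M A g" "AE x in M. x \<in> A \<longrightarrow> f x = g x"
  shows "(LINT x:A|M. f x) = (LINT x:A|M. g x)"
  using assms unfolding set_integrable_def set_lebesgue_integral_def
  by (intro integral_cong_AE) (auto simp: indicator_def dest: borel_measurable_integrable)

lemma (in prob_space) sum_prob_partition:
  assumes "finite I" "disjoint_family_on A I" "(\<Union>i\<in>I. A i) = space M" "A ` I \<subseteq> events"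
  shows "(\<Sum>i\<in>I. prob (A i)) = 1"
  using assms finite_measure_finite_Union[of I A] by (simp add: prob_space)

lemma set_integral_ln_divide:
  fixes a b :: "'a \<Rightarrow> real"
  assumes "AE x in M. a x > 0 \<and> b x > 0"
    and "set_integrable M A (\<lambda>x. ln (a x / b x))"
    and "set_integrable M A (\<lambda>x. ln (a x))" "set_integrable M A (\<lambda>x. ln (b x))"
  shows "(LINT x:A|M. ln (a x / b x)) = (LINT x:A|M. ln (a x)) - (LINT x:A|M. ln (b x))"
proof -
  have "(LINT x:A|M. ln (a x / b x)) = (LINT x:A|M. ln (a x) - ln (b x))"
    using assms by (intro set_integral_cong_AE_integrable) (auto elim: eventually_mono simp: ln_div)
  then show ?thesis using assms(3,4) by simp
qed

lemma set_integral_qs: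
  fixes S :: "real^'n^'n" and g :: "real^'n \<Rightarrow> real"
  assumes "finite_measure M" "A \<in> sets M"
    and "w > 0" "det S > 0" "AE x in M. g x > 0"
    and "set_integrable M A (\<lambda>x. qs x (w, mu, S))"
    and "set_integrable M A (\<lambda>x. ln (w * g x))"
    and "set_integrable M A (\<lambda>x. ln (g x / gauss_dens x mu S))"
  shows "(LINT x:A|M. qs x (w, mu, S)) = measure M A * (real CARD('n) / 2 * ln (2 * pi))
           + (LINT x:A|M. ln (w * g x)) - (LINT x:A|M. ln (g x / gauss_dens x mu S))"
proof -
  let ?c = "real CARD('n) / 2 * ln (2 * pi)"
  have const: "set_integrable M A (\<lambda>_. ?c)"
    using assms(1,2) unfolding set_integrable_def
    by (intro integrable_indicator) (auto simp: finite_measure.emeasure_finite less_top[symmetric])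
  have "AE x in M. qs x (w, mu, S) = ?c + ln (w * g x) - ln (g x / gauss_dens x mu S)"
    using assms(5)
  proof eventually_elim
    fix x assume "g x > 0"
    moreover have "gauss_dens x mu S > 0" using assms(4) by (rule gauss_dens_pos)
    ultimately show "qs x (w, mu, S) = ?c + ln (w * g x) - ln (g x / gauss_dens x mu S)"
      using assms(3,4) by (simp add: qs_eq_ln_gauss_dens ln_mult_pos ln_divide_pos)
  qed
  then have "(LINT x:A|M. qs x (w, mu, S))
      = (LINT x:A|M. ?c + ln (w * g x) - ln (g x / gauss_dens x mu S))"
    using assms(6-8) const by (intro set_integral_cong_AE_integrable) (auto elim: eventually_mono)
  then show ?thesis
    using assms(1,2,7,8) const by (simp add: set_integral_const finite_measure.emeasure_finite)
qed

theorem proposition2: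
  fixes F :: "(real^'n) measure"
    and f :: "real^'n \<Rightarrow> real^'n \<Rightarrow> real^'n^'n \<Rightarrow> real"
    and Ms :: "'n config set"
  assumes F: "prob_space F" "sets F = sets borel"
    and f_dens: "\<And>mu S. pos_def S \<Longrightarrow>
        (\<lambda>x. f x mu S) \<in> borel_measurable borel \<and> (\<forall>x. f x mu S \<ge> 0) \<and>
        integral\<^sup>L lborel (\<lambda>x. f x mu S) = 1"
    and valid: "\<And>th. th \<in> Ms \<Longrightarrow> valid_config th"
    and partition: "\<And>th. th \<in> Ms \<Longrightarrow>
        (\<Union>k<K th. Qset th k) = UNIV \<and> disjoint_family_on (Qset th) {..<K th}"
    and f_pos: "\<And>th k. th \<in> Ms \<Longrightarrow> k < K th \<Longrightarrow>
        AE x in F. f x (cmu th k) (cSig th k) > 0"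
    and integrable: "\<And>th k. th \<in> Ms \<Longrightarrow> k < K th \<Longrightarrow>
        set_integrable F (Qset th k) (\<lambda>x. ln (cw th k * f x (cmu th k) (cSig th k))) \<and>
        set_integrable F (Qset th k) (\<lambda>x. qs x (th ! k)) \<and>
        set_integrable F (Qset th k) (\<lambda>x. ln (f x (cmu th k) (cSig th k))) \<and>
        set_integrable F (Qset th k) (\<lambda>x. ln (gauss_dens x (cmu th k) (cSig th k))) \<and>
        set_integrable F (Qset th k)
          (\<lambda>x. ln (f x (cmu th k) (cSig th k) / gauss_dens x (cmu th k) (cSig th k)))"
    and C3: "\<And>th k. th \<in> Ms \<Longrightarrow> k < K th \<Longrightarrow>
        (LINT x:Qset th k|F. ln (f x (cmu th k) (cSig th k)))
          - (LINT x:Qset th k|F. ln (gauss_dens x (cmu th k) (cSig th k))) \<ge> 0"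
  shows "\<exists>c > 0. \<forall>th \<in> Ms.
           Hcrit F th = c + Lcrit F f th - Lambda F f th \<and> Lambda F f th \<ge> 0"
proof (intro exI[of _ "real CARD('n) / 2 * ln (2 * pi)"] conjI ballI)
  interpret prob_space F by (rule F(1))
  let ?c = "real CARD('n) / 2 * ln (2 * pi)"
  show "?c > 0" using pi_gt3 by simp
  fix th assume th: "th \<in> Ms"
  let ?ln_ratio = "\<lambda>k x. ln (f x (cmu th k) (cSig th k) / gauss_dens x (cmu th k) (cSig th k))"
  have Q_events: "Qset th k \<in> events" for k using Qset_sets_borel F(2) by simp
  have component: "(LINT x:Qset th k|F. qs x (th ! k)) = prob (Qset th k) * ?c
        + (LINT x:Qset th k|F. ln (cw th k * f x (cmu th k) (cSig th k)))
        - (LINT x:Qset th k|F. ?ln_ratio k x)"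
      "(LINT x:Qset th k|F. ?ln_ratio k x) \<ge> 0" if k: "k < K th" for k
  proof -
    note th_k = valid_config_nth[OF valid[OF th] k]
    have det_pos: "det (cSig th k) > 0" using pos_def_det_pos th_k(3) .
    show "(LINT x:Qset th k|F. qs x (th ! k)) = prob (Qset th k) * ?c
        + (LINT x:Qset th k|F. ln (cw th k * f x (cmu th k) (cSig th k)))
        - (LINT x:Qset th k|F. ?ln_ratio k x)"
      using integrable[OF th k] f_pos[OF th k] th_k(2) det_pos Q_events
      by (subst th_k(1), intro set_integral_qs) (simp_all add: finite_measure_axioms th_k(1)[symmetric])
    show "(LINT x:Qset th k|F. ?ln_ratio k x) \<ge> 0"
      using integrable[OF th k] f_pos[OF th k] C3[OF th k] det_pos
      by (subst set_integral_ln_divide) (auto elim: eventually_mono intro: gauss_dens_pos)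
  qed
  have "(\<Sum>k<K th. prob (Qset th k)) = 1"
    using partition[OF th] Q_events
    by (intro sum_prob_partition) (auto simp: sets_eq_imp_space_eq[OF F(2)])
  moreover have "Hcrit F th = (\<Sum>k<K th. prob (Qset th k)) * ?c + Lcrit F f th - Lambda F f th"
    unfolding Hcrit_def Lcrit_def Lambda_def
    by (simp add: component(1) sum.distrib sum_subtractf sum_distrib_right)
  ultimately show "Hcrit F th = ?c + Lcrit F f th - Lambda F f th" by simp
  show "Lambda F f th \<ge> 0" unfolding Lambda_def by (intro sum_nonneg component(2)) simp
qed

end
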